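(* Under the Standing setup, for every invocation $\textsc{MSSP}(I,H_I)$ occurring during the execution of $\textsc{MSSP}([0,k-1],G)$, no edge incident to a vertex of $V_\infty$ is contracted (i.e., no edge incident to a vertex of $V_\infty$ belongs to any tree $T(s)\in\mathcal T_J$ that is contracted to form $H_J$).
   Context: Standing setup. $G=(V,E)$ is a planar embedded directed graph (embedding given by a rotation system, i.e. the clockwise order of edges around each vertex) with non-negative edge weights (weight $\infty$ allowed), in which shortest paths are unique. The infinite face $f_\infty$ is a simple directed cycle all of whose edges have weight $\infty$; $V_\infty=\{r_0,\dots,r_{k-1}\}$ is its vertex set in clockwise order. It is assumed that no shortest path contains an edge entering a vertex of $V_\infty$, and that for every $r_i$ and every $u\in V\setminus V_\infty$ there is a path from $r_i$ to $u$ meeting $V_\infty$ only in $r_i$. For a graph $H$, $d_H(x,y)$ is the shortest-path distance and $P_H[x,y]$ the shortest path; for a rooted tree $T$ and vertex $v$ other than the root, $\pi_T(v)$ is the parent of $v$ in $T$. Contracting an edge set $E'$ (written $H/E'$) merges each connected component of $E'$ into one vertex (identified with a designated vertex of the component), deletes self-loops, and keeps only the cheapest edge among parallel edges; the rotation system is inherited. Procedure $\textsc{MSSP}(I=[i_1,i_2],H_I)$ (initial call $\textsc{MSSP}([0,k-1],G)$; the initial call is at recursion level $0$ and calls it makes are at level $h+1$ if it is at level $h$): let $i=\lfloor (i_1+i_2)/2\rfloor$. For each $m\in\{i_1,i,i_2\}$ compute and store the shortest-path tree $T_{I,m}$ from $r_m$ in $H_I[(V(H_I)\setminus V_\infty)\cup\{r_m\}]$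 (more generally, $T_{I,m}$ denotes this tree for any $m\in I$). If $i_2-i_1\le1$, stop. Otherwise, for each $J=[j_1,j_2]\in\{[i_1,i],[i,i_2]\}$: start with $H_J:=H_I$; let $E_{shared}=E(T_{I,j_1})\cap E(T_{I,j_2})$ (a forest). For each vertex $s$ with $\pi_{T_{I,j_1}}(s)\ne\pi_{T_{I,j_2}}(s)$, let $T(s)$ be the tree rooted at $s$ consisting of every edge $(s,v)\in E_{shared}$ such that $(s,v),(s,\pi_{T_{I,j_1}}(s)),(s,\pi_{T_{I,j_2}}(s))$ are in clockwise order around $s$, together with all edges of $E_{shared}$ descending from such $v$; let $\mathcal T_J$ be the collection of these (vertex-disjoint, maximal) trees. For each $T(s)\in\mathcal T_J$: for every $u\in T(s)$ record $s_J(u):=s$ and $\delta_J(u):=d_{T(s)}(s,u)$; for every edge $(u,v)$ of $H_J$ with exactly one endpoint in $T(s)$, if $u\in T(s)$ increase its weight by $\delta_J(u)$, and if $v\in T(s)\setminus\{s\}$ set its weight to $\infty$; then contract $T(s)$ to a single vertex identified with $s$. For vertices $u$ of $H_I$ in no tree of $\mathcal T_J$, set $s_J(u):=u$, $\delta_J(u):=0$. Then call $\textsc{MSSP}(J,H_J)$. *)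

theory Defs
  imports Complex_Main "HOL-Library.Extended_Nonnegative_Real"
begin

text \<open>A simple embedded directed graph: vertex set, arc set (ordered pairs, no loops),
  non-negative weights (possibly infinite, ennreal), and a rotation system:
  rot H v is the clockwise successor map on the arcs incident to v.\<close>

record 'v egraph =
  verts :: "'v set"
  arcs  :: "('v \<times> 'v) set"
  wt    :: "'v \<times> 'v \<Rightarrow> ennreal"
  rot   :: "'v \<Rightarrow> 'v \<times> 'v \<Rightarrow> 'v \<times> 'v"

definition inc :: "'v egraph \<Rightarrow> 'v \<Rightarrow> ('v \<times> 'v) set" where
  "inc H v = {e \<in> arcs H. fst e = v \<or> snd e = v}"

definition wf_egraph :: "'v egraph \<Rightarrow> bool" where
  "wf_egraph H \<longleftrightarrow> finite (verts H) \<and> arcs H \<subseteq> verts H \<times> verts H \<and>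
     (\<forall>v. (v, v) \<notin> arcs H) \<and>
     (\<forall>v\<in>verts H. bij_betw (rot H v) (inc H v) (inc H v) \<and>
        (\<forall>a\<in>inc H v. \<forall>b\<in>inc H v. \<exists>n. (rot H v ^^ n) a = b))"

definition walk_edges :: "'v list \<Rightarrow> ('v \<times> 'v) list" where
  "walk_edges xs = zip xs (tl xs)"

definition walk :: "('v \<times> 'v) set \<Rightarrow> 'v list \<Rightarrow> bool" where
  "walk E xs \<longleftrightarrow> xs \<noteq> [] \<and> set (walk_edges xs) \<subseteq> E"

definition walk_len :: "('v \<times> 'v \<Rightarrow> ennreal) \<Rightarrow> 'v list \<Rightarrow> ennreal" where
  "walk_len w xs = sum_list (map w (walk_edges xs))"

definition walks_betw :: "('v \<times> 'v) set \<Rightarrow> 'v \<Rightarrow> 'v \<Rightarrow> 'v list set" where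
  "walks_betw E x y = {xs. walk E xs \<and> hd xs = x \<and> last xs = y}"

definition dist :: "('v \<times> 'v \<Rightarrow> ennreal) \<Rightarrow> ('v \<times> 'v) set \<Rightarrow> 'v \<Rightarrow> 'v \<Rightarrow> ennreal" where
  "dist w E x y = (INF xs\<in>walks_betw E x y. walk_len w xs)"

section \<open>Planarity via the rotation system (faces and Euler's formula)\<close>

text \<open>A dart is an arc together with a direction (True = traversed from fst to snd).
  Faces are the orbits of the face-tracing permutation: arriving at v along arc e,
  continue along the clockwise successor of e at v (faces lie to the left, so
  bounded faces are traversed counterclockwise and the outer face clockwise).\<close>

definition dart_head :: "('v \<times> 'v) \<times> bool \<Rightarrow> 'v" where
  "dart_head d = (if snd d then snd (fst d) else fst (fst d))"

definition face_step :: "'v egraph \<Rightarrow> ('v \<times> 'v) \<times> bool \<Rightarrow> ('v \<times> 'v) \<times> bool" where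
  "face_step H d = (let v = dart_head d; e' = rot H v (fst d) in (e', fst e' = v))"

definition face_orbit :: "'v egraph \<Rightarrow> ('v \<times> 'v) \<times> bool \<Rightarrow> (('v \<times> 'v) \<times> bool) set" where
  "face_orbit H d = range (\<lambda>n. (face_step H ^^ n) d)"

definition faces :: "'v egraph \<Rightarrow> (('v \<times> 'v) \<times> bool) set set" where
  "faces H = face_orbit H ` (arcs H \<times> UNIV)"

definition planar_embedded :: "'v egraph \<Rightarrow> bool" where
  "planar_embedded H \<longleftrightarrow> wf_egraph H \<and> arcs H \<noteq> {} \<and>
     (\<forall>x\<in>verts H. \<forall>y\<in>verts H. (x, y) \<in> (arcs H \<union> (arcs H)\<inverse>)\<^sup>*) \<and>
     int (card (verts H)) - int (card (arcs H)) + int (card (faces H)) = 2"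

definition Vinf :: "(nat \<Rightarrow> 'v) \<Rightarrow> nat \<Rightarrow> 'v set" where
  "Vinf r k = r ` {..<k}"

definition cyc_edge :: "(nat \<Rightarrow> 'v) \<Rightarrow> nat \<Rightarrow> bool \<Rightarrow> nat \<Rightarrow> 'v \<times> 'v" where
  "cyc_edge r k dir i = (if dir then (r i, r (Suc i mod k)) else (r (Suc i mod k), r i))"

definition outer_face :: "'v egraph \<Rightarrow> (nat \<Rightarrow> 'v) \<Rightarrow> nat \<Rightarrow> bool" where
  "outer_face G r k \<longleftrightarrow> 2 \<le> k \<and> inj_on r {..<k} \<and> r ` {..<k} \<subseteq> verts G \<and>
     (\<exists>dir. \<forall>i<k. cyc_edge r k dir i \<in> arcs G \<and> wt G (cyc_edge r k dir i) = \<infinity> \<and>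
        face_step G (cyc_edge r k dir i, dir) = (cyc_edge r k dir (Suc i mod k), dir))"

definition unique_sp :: "'v egraph \<Rightarrow> bool" where
  "unique_sp G \<longleftrightarrow> (\<forall>x y. dist (wt G) (arcs G) x y < \<infinity> \<longrightarrow>
     (\<exists>!xs. xs \<in> walks_betw (arcs G) x y \<and> walk_len (wt G) xs = dist (wt G) (arcs G) x y))"

definition is_shortest_path :: "'v egraph \<Rightarrow> 'v list \<Rightarrow> bool" where
  "is_shortest_path G xs \<longleftrightarrow> (\<exists>x y. xs \<in> walks_betw (arcs G) x y \<and>
     dist (wt G) (arcs G) x y < \<infinity> \<and> walk_len (wt G) xs = dist (wt G) (arcs G) x y)"

definition no_sp_enters_Vinf :: "'v egraph \<Rightarrow> (nat \<Rightarrow> 'v) \<Rightarrow> nat \<Rightarrow> bool" where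
  "no_sp_enters_Vinf G r k \<longleftrightarrow>
     (\<forall>xs. is_shortest_path G xs \<longrightarrow> (\<forall>e\<in>set (walk_edges xs). snd e \<notin> Vinf r k))"

definition reach_cond :: "'v egraph \<Rightarrow> (nat \<Rightarrow> 'v) \<Rightarrow> nat \<Rightarrow> bool" where
  "reach_cond G r k \<longleftrightarrow> (\<forall>i<k. \<forall>u\<in>verts G - Vinf r k.
     \<exists>xs\<in>walks_betw (arcs G) (r i) u. set xs \<inter> Vinf r k = {r i})"

definition standing :: "'v egraph \<Rightarrow> (nat \<Rightarrow> 'v) \<Rightarrow> nat \<Rightarrow> bool" where
  "standing G r k \<longleftrightarrow> planar_embedded G \<and> outer_face G r k \<and> unique_sp G \<and>
     no_sp_enters_Vinf G r k \<and> reach_cond G r k"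

definition sub_verts :: "'v egraph \<Rightarrow> (nat \<Rightarrow> 'v) \<Rightarrow> nat \<Rightarrow> nat \<Rightarrow> 'v set" where
  "sub_verts H r k m = (verts H - Vinf r k) \<union> {r m}"

definition sub_arcs :: "'v egraph \<Rightarrow> (nat \<Rightarrow> 'v) \<Rightarrow> nat \<Rightarrow> nat \<Rightarrow> ('v \<times> 'v) set" where
  "sub_arcs H r k m = {e \<in> arcs H. fst e \<in> sub_verts H r k m \<and> snd e \<in> sub_verts H r k m}"

text \<open>T is a shortest-path tree from r m in H[(V(H) - V_inf) + {r m}]: an arborescence
  rooted at r m spanning the vertices at finite distance from r m, whose tree paths
  are shortest paths.\<close>
definition spt :: "'v egraph \<Rightarrow> (nat \<Rightarrow> 'v) \<Rightarrow> nat \<Rightarrow> nat \<Rightarrow> ('v \<times> 'v) set \<Rightarrow> bool" where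
  "spt H r k m T \<longleftrightarrow>
     (let A = sub_arcs H r k m; d = dist (wt H) A (r m);
          VT = {v \<in> sub_verts H r k m. d v < \<infinity>}
      in T \<subseteq> A \<inter> (VT \<times> VT) \<and> (\<forall>u. (u, r m) \<notin> T) \<and>
         (\<forall>v\<in>VT - {r m}. \<exists>!u. (u, v) \<in> T) \<and>
         (\<forall>v\<in>VT. dist (wt H) T (r m) v = d v))"

definition has_parent :: "('v \<times> 'v) set \<Rightarrow> 'v \<Rightarrow> bool" where
  "has_parent T v \<longleftrightarrow> (\<exists>u. (u, v) \<in> T)"

definition parent :: "('v \<times> 'v) set \<Rightarrow> 'v \<Rightarrow> 'v" where
  "parent T v = (THE u. (u, v) \<in> T)"

definition split_vertex :: "('v \<times> 'v) set \<Rightarrow> ('v \<times> 'v) set \<Rightarrow> 'v \<Rightarrow> bool" where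
  "split_vertex T1 T2 s \<longleftrightarrow> has_parent T1 s \<and> has_parent T2 s \<and> parent T1 s \<noteq> parent T2 s"

definition cw :: "('e \<Rightarrow> 'e) \<Rightarrow> 'e \<Rightarrow> 'e \<Rightarrow> 'e \<Rightarrow> bool" where
  "cw \<rho> a b c \<longleftrightarrow> a \<noteq> b \<and> b \<noteq> c \<and> a \<noteq> c \<and>
     (\<exists>i j. 0 < i \<and> i < j \<and> (\<rho> ^^ i) a = b \<and> (\<rho> ^^ j) a = c \<and>
        (\<forall>l\<in>{1..j}. (\<rho> ^^ l) a \<noteq> a))"

definition start_edges :: "'v egraph \<Rightarrow> ('v \<times> 'v) set \<Rightarrow> ('v \<times> 'v) set \<Rightarrow> 'v \<Rightarrow> ('v \<times> 'v) set" where
  "start_edges H T1 T2 s = {e \<in> T1 \<inter> T2. fst e = s \<and>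
     cw (rot H s) e (parent T1 s, s) (parent T2 s, s)}"

definition subtree :: "'v egraph \<Rightarrow> ('v \<times> 'v) set \<Rightarrow> ('v \<times> 'v) set \<Rightarrow> 'v \<Rightarrow> ('v \<times> 'v) set" where
  "subtree H T1 T2 s = start_edges H T1 T2 s \<union>
     {e \<in> T1 \<inter> T2. \<exists>e0\<in>start_edges H T1 T2 s. (snd e0, fst e) \<in> (T1 \<inter> T2)\<^sup>*}"

definition subtree_verts :: "'v egraph \<Rightarrow> ('v \<times> 'v) set \<Rightarrow> ('v \<times> 'v) set \<Rightarrow> 'v \<Rightarrow> 'v set" where
  "subtree_verts H T1 T2 s = insert s (snd ` subtree H T1 T2 s)"

definition in_tree :: "'v egraph \<Rightarrow> ('v \<times> 'v) set \<Rightarrow> ('v \<times> 'v) set \<Rightarrow> 'v \<Rightarrow> bool" where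
  "in_tree H T1 T2 u \<longleftrightarrow> (\<exists>s. split_vertex T1 T2 s \<and> u \<in> subtree_verts H T1 T2 s)"

definition sJ :: "'v egraph \<Rightarrow> ('v \<times> 'v) set \<Rightarrow> ('v \<times> 'v) set \<Rightarrow> 'v \<Rightarrow> 'v" where
  "sJ H T1 T2 u = (if in_tree H T1 T2 u
      then (SOME s. split_vertex T1 T2 s \<and> u \<in> subtree_verts H T1 T2 s) else u)"

definition deltaJ :: "'v egraph \<Rightarrow> ('v \<times> 'v) set \<Rightarrow> ('v \<times> 'v) set \<Rightarrow> 'v \<Rightarrow> ennreal" where
  "deltaJ H T1 T2 u = (if in_tree H T1 T2 u
      then dist (wt H) (subtree H T1 T2 (sJ H T1 T2 u)) (sJ H T1 T2 u) u else 0)"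

definition mod_wt :: "'v egraph \<Rightarrow> ('v \<times> 'v) set \<Rightarrow> ('v \<times> 'v) set \<Rightarrow> 'v \<times> 'v \<Rightarrow> ennreal" where
  "mod_wt H T1 T2 e = (if in_tree H T1 T2 (snd e) \<and> snd e \<noteq> sJ H T1 T2 (snd e) then \<infinity>
      else wt H e + deltaJ H T1 T2 (fst e))"

definition c_arcs :: "'v egraph \<Rightarrow> ('v \<times> 'v) set \<Rightarrow> ('v \<times> 'v) set \<Rightarrow> ('v \<times> 'v) set" where
  "c_arcs H T1 T2 = {(sJ H T1 T2 (fst e), sJ H T1 T2 (snd e)) | e.
      e \<in> arcs H \<and> sJ H T1 T2 (fst e) \<noteq> sJ H T1 T2 (snd e)}"

text \<open>Among parallel arcs only the cheapest is kept.\<close>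
definition c_wt :: "'v egraph \<Rightarrow> ('v \<times> 'v) set \<Rightarrow> ('v \<times> 'v) set \<Rightarrow> 'v \<times> 'v \<Rightarrow> ennreal" where
  "c_wt H T1 T2 e' = (INF e\<in>{e \<in> arcs H. (sJ H T1 T2 (fst e), sJ H T1 T2 (snd e)) = e'}.
      mod_wt H T1 T2 e)"

text \<open>rep maps each arc of H_J to the (cheapest) arc of H it comes from; ties between
  equally cheap parallel arcs are resolved arbitrarily.\<close>
definition valid_rep :: "'v egraph \<Rightarrow> ('v \<times> 'v) set \<Rightarrow> ('v \<times> 'v) set \<Rightarrow> ('v \<times> 'v \<Rightarrow> 'v \<times> 'v) \<Rightarrow> bool" where
  "valid_rep H T1 T2 rep \<longleftrightarrow> (\<forall>e'\<in>c_arcs H T1 T2. rep e' \<in> arcs H \<and>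
      (sJ H T1 T2 (fst (rep e')), sJ H T1 T2 (snd (rep e'))) = e' \<and>
      mod_wt H T1 T2 (rep e') = c_wt H T1 T2 e')"

definition other_end :: "'v \<times> 'v \<Rightarrow> 'v \<Rightarrow> 'v" where
  "other_end e v = (if fst e = v then snd e else fst e)"

text \<open>One step of the clockwise walk around a contracted tree Tr (inherited rotation).\<close>
definition tour_step :: "('v \<Rightarrow> 'v \<times> 'v \<Rightarrow> 'v \<times> 'v) \<Rightarrow> ('v \<times> 'v) set \<Rightarrow>
    'v \<times> ('v \<times> 'v) \<Rightarrow> 'v \<times> ('v \<times> 'v)" where
  "tour_step \<rho> Tr st = (let v = fst st; e' = \<rho> v (snd st) in
      if e' \<in> Tr then (other_end e' v, e') else (v, e'))"

definition cluster_tree :: "'v egraph \<Rightarrow> ('v \<times> 'v) set \<Rightarrow> ('v \<times> 'v) set \<Rightarrow> 'v \<Rightarrow> ('v \<times> 'v) set" where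
  "cluster_tree H T1 T2 x = (if split_vertex T1 T2 x then subtree H T1 T2 x else {})"

text \<open>Rotation system of H_J inherited from H.\<close>
definition c_rot :: "'v egraph \<Rightarrow> ('v \<times> 'v) set \<Rightarrow> ('v \<times> 'v) set \<Rightarrow> ('v \<times> 'v \<Rightarrow> 'v \<times> 'v) \<Rightarrow>
    'v \<Rightarrow> 'v \<times> 'v \<Rightarrow> 'v \<times> 'v" where
  "c_rot H T1 T2 rep x e' =
     (let e0 = rep e';
          v0 = (if sJ H T1 T2 (fst e0) = x then fst e0 else snd e0);
          st = (\<lambda>n. (tour_step (rot H) (cluster_tree H T1 T2 x) ^^ n) (v0, e0));
          n = (LEAST n. 0 < n \<and> snd (st n) \<in> rep ` c_arcs H T1 T2);
          e1 = snd (st n)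
      in (sJ H T1 T2 (fst e1), sJ H T1 T2 (snd e1)))"

definition contract :: "'v egraph \<Rightarrow> ('v \<times> 'v) set \<Rightarrow> ('v \<times> 'v) set \<Rightarrow> ('v \<times> 'v \<Rightarrow> 'v \<times> 'v) \<Rightarrow> 'v egraph" where
  "contract H T1 T2 rep =
     \<lparr> verts = sJ H T1 T2 ` verts H, arcs = c_arcs H T1 T2, wt = c_wt H T1 T2,
       rot = c_rot H T1 T2 rep \<rparr>"

text \<open>invocation G r k i1 i2 H: the call MSSP([i1,i2], H) occurs during the execution of
  MSSP([0,k-1], G).\<close>
inductive invocation :: "'v egraph \<Rightarrow> (nat \<Rightarrow> 'v) \<Rightarrow> nat \<Rightarrow> nat \<Rightarrow> nat \<Rightarrow> 'v egraph \<Rightarrow> bool"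
  for G r k where
  init: "invocation G r k 0 (k - 1) G"
| recur: "\<lbrakk> invocation G r k i1 i2 H; i1 + 2 \<le> i2;
            (j1, j2) \<in> {(i1, (i1 + i2) div 2), ((i1 + i2) div 2, i2)};
            spt H r k j1 T1; spt H r k j2 T2; valid_rep H T1 T2 rep \<rbrakk>
          \<Longrightarrow> invocation G r k j1 j2 (contract H T1 T2 rep)"

end

theory Submission
  imports Defs
begin

text \<open>Each tree T(s) consists of edges shared by the shortest-path trees from two distinct
  roots r j1 and r j2. The tree from r m lives in the graph obtained by deleting every vertex of
  V_inf except r m, so a shared edge can only touch V_inf in a vertex equal to both r j1 and
  r j2, which is impossible since the outer cycle is simple.\<close>

lemma invocation_upper_le:
  assumes "invocation G r k i1 i2 H"
  shows "i2 \<le> k - 1"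
  using assms
proof (induction rule: invocation.induct)
  case init
  then show ?case by simp
next
  case (recur i1 i2 H j1 j2 T1 T2 rep)
  from \<open>(j1, j2) \<in> _\<close> \<open>i1 + 2 \<le> i2\<close> have "j2 \<le> i2" by auto
  with recur.IH show ?case by linarith
qed

lemma subtree_subset_shared: "subtree H T1 T2 s \<subseteq> T1 \<inter> T2"
  unfolding subtree_def start_edges_def by blast

lemma spt_subset_sub_arcs: "spt H r k m T \<Longrightarrow> T \<subseteq> sub_arcs H r k m"
  unfolding spt_def Let_def by blast

lemma sub_arcs_shared_avoid_Vinf:
  assumes "e \<in> sub_arcs H r k m" and "e \<in> sub_arcs H r k m'" and "r m \<noteq> r m'"
  shows "fst e \<notin> Vinf r k \<and> snd e \<notin> Vinf r k"
  using assms unfolding sub_arcs_def sub_verts_def by auto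

lemma child_roots_distinct:
  assumes "standing G r k" and "invocation G r k i1 i2 H" and "i1 + 2 \<le> i2"
    and "(j1, j2) \<in> {(i1, (i1 + i2) div 2), ((i1 + i2) div 2, i2)}"
  shows "r j1 \<noteq> r j2"
proof -
  have "outer_face G r k"
    using assms(1) unfolding standing_def by blast
  then have "inj_on r {..<k}"
    unfolding outer_face_def by blast
  moreover have "j1 < j2" "j2 < k"
    using invocation_upper_le[OF assms(2)] assms(3,4) by auto
  ultimately show ?thesis
    by (auto dest: inj_onD)
qed

theorem claim1:
  fixes G :: "'v egraph" and r :: "nat \<Rightarrow> 'v" and k :: nat
  assumes "standing G r k"
    and "invocation G r k i1 i2 H"
    and "i1 + 2 \<le> i2"
    and "(j1, j2) \<in> {(i1, (i1 + i2) div 2), ((i1 + i2) div 2, i2)}"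
    and "spt H r k j1 T1" and "spt H r k j2 T2"
    and "split_vertex T1 T2 s"
    and "e \<in> subtree H T1 T2 s"
  shows "fst e \<notin> Vinf r k \<and> snd e \<notin> Vinf r k"
proof -
  have "e \<in> T1" and "e \<in> T2"
    using subsetD[OF subtree_subset_shared assms(8)] by simp_all
  then have "e \<in> sub_arcs H r k j1" and "e \<in> sub_arcs H r k j2"
    using subsetD[OF spt_subset_sub_arcs[OF assms(5)]]
      subsetD[OF spt_subset_sub_arcs[OF assms(6)]] by simp_all
  moreover have "r j1 \<noteq> r j2"
    using assms(1-4) by (rule child_roots_distinct)
  ultimately show ?thesis
    by (rule sub_arcs_shared_avoid_Vinf)
qed

end
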